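(* Let $\mathbf{X}$ be a finite collection of discrete random variables, and let $B_1,\dots,B_m$ be buckets with associated variable sets $\mathbf{X}_{B_1},\dots,\mathbf{X}_{B_m}\subseteq\mathbf{X}$ that are pairwise disjoint. Let $\mathbf{X}'=\mathbf{X}\setminus\bigcup_{B}\mathbf{X}_B$. Let $p(\mathbf{X})$ be the distribution of a normalized, smooth, decomposable probabilistic circuit, written as a discrete mixture $$p(\mathbf{x})=\sum_{z}p(z)\prod_{B}p_z(\mathbf{x}_B)\prod_{X_i\in\mathbf{X}'}p_z(x_i),$$ where $Z$ is the discrete latent variable induced by the sum nodes, $p(z)$ is its distribution, each $p_z(\mathbf{X}_B)$ is a categorical distribution over $\mathbf{X}_B$ and each $p_z(X_i)$ is a univariate distribution. Let $q(\mathbf{X})$ be a distribution of the same form $$q(\mathbf{x})=\sum_{z}p(z)\prod_{B}q_z(\mathbf{x}_B)\prod_{X_i\in\mathbf{X}'}p_z(x_i),$$ where each $q_z(\mathbf{X}_B)$ is a categorical distribution over $\mathbf{X}_B$. Then $$H\big(p(\mathbf{X}),q(\mathbf{X})\big)\;\le\;\sum_{B}\mathbb{E}_{z\sim p(Z)}\Big[H\big(p_z(\mathbf{X}_B),q_z(\mathbf{X}_B)\big)\Big]+H\big(p(\mathbf{X}',Z)\big),$$ where $p(\mathbf{x}',z)=p(z)\prod_{X_i\in\mathbf{X}'}p_z(x_i)$.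
   Context: $H(p,q)=-\sum_{\mathbf{x}}p(\mathbf{x})\log q(\mathbf{x})$ denotes cross entropy and $H(p)$ denotes entropy. The buckets arise from linear probabilistic propositional logic constraints of the form $\sum_{i_c}\tau_{i_c}\,p(F_{i_c})\le\alpha_c$, where each $F_{i_c}$ is a propositional formula over Boolean variables $\mathbf{X}_c\subseteq\mathbf{X}$; constraints sharing variables are grouped into the same bucket $B$, and $\mathbf{X}_B=\bigcup_{c\in B}\mathbf{X}_c$, so distinct buckets have disjoint variable sets. The circuit is assumed to keep all variables of a bucket together: for every node $v$ and bucket $B$, if $\mathbf{X}_B\cap\mathrm{scope}(v)\neq\emptyset$ then $\mathbf{X}_B\subseteq\mathrm{scope}(v)$, which yields the displayed mixture form of $p$ with components indexed by the states $z$ of the latent variable $Z$. *)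

theory Defs
  imports Complex_Main "HOL-Library.FuncSet" "HOL-Library.Extended_Real" "HOL-Library.Disjoint_Sets"
begin

text \<open>Cross entropy H(p,q) = - sum_w p(w) log q(w) of two finitely supported
  distributions over a finite outcome set, with the usual conventions
  0 log 0 = 0 (terms with p w = 0 vanish) and - p log 0 = +infinity for p > 0.
  Natural logarithm is used; the base is irrelevant for the inequality.\<close>
definition cross_entropy :: "'w set \<Rightarrow> ('w \<Rightarrow> real) \<Rightarrow> ('w \<Rightarrow> real) \<Rightarrow> ereal" where
  "cross_entropy \<Omega> p q =
     (\<Sum>w\<in>\<Omega>. if p w = 0 then 0
              else if q w = 0 then \<infinity>
              else ereal (- p w * ln (q w)))"

definition entropy :: "'w set \<Rightarrow> ('w \<Rightarrow> real) \<Rightarrow> ereal" where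
  "entropy \<Omega> p = cross_entropy \<Omega> p p"

definition is_distribution :: "'w set \<Rightarrow> ('w \<Rightarrow> real) \<Rightarrow> bool" where
  "is_distribution \<Omega> p \<longleftrightarrow> finite \<Omega> \<and> (\<forall>w\<in>\<Omega>. 0 \<le> p w) \<and> (\<Sum>w\<in>\<Omega>. p w) = 1"

definition mixture ::
  "'z set \<Rightarrow> ('z \<Rightarrow> real) \<Rightarrow> 'b set \<Rightarrow> ('b \<Rightarrow> 'v set) \<Rightarrow>
   ('z \<Rightarrow> 'b \<Rightarrow> ('v \<Rightarrow> 'a) \<Rightarrow> real) \<Rightarrow> 'v set \<Rightarrow> ('z \<Rightarrow> 'v \<Rightarrow> 'a \<Rightarrow> real) \<Rightarrow>
   ('v \<Rightarrow> 'a) \<Rightarrow> real" where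
  "mixture Zs pz Bs XB pB X' pu x =
     (\<Sum>z\<in>Zs. pz z * (\<Prod>b\<in>Bs. pB z b (restrict x (XB b))) * (\<Prod>i\<in>X'. pu z i (x i)))"

end

theory Submission
  imports Defs
begin

text \<open>Write \<open>p(x) = \<Sum>\<^sub>z p(x,z)\<close> and \<open>q(x) = \<Sum>\<^sub>z q(x,z)\<close> with the joint densities of \<open>(X, Z)\<close>.
  Since \<open>q(x,z) \<le> q(x)\<close>, every term \<open>-p(x) log q(x)\<close> is bounded by \<open>\<Sum>\<^sub>z -p(x,z) log q(x,z)\<close>, so
  \<open>H(p,q)\<close> is at most the cross entropy of the joints. Both joints factor as
  \<open>p(x',z) \<Prod>\<^sub>B p\<^sub>z(x\<^sub>B)\<close> and \<open>p(x',z) \<Prod>\<^sub>B q\<^sub>z(x\<^sub>B)\<close> over disjoint blocks of variables, so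
  \<open>log q(x,z)\<close> splits into one summand per block plus \<open>log p(x',z)\<close>; summing each summand against
  \<open>p(x,z)\<close> marginalises away all other blocks, which leaves exactly
  \<open>\<Sum>\<^sub>B E\<^sub>z H(p\<^sub>z(X\<^sub>B), q\<^sub>z(X\<^sub>B)) + H(p(X',Z))\<close>. When some \<open>q\<^sub>z\<close> vanishes where
  \<open>p(z) p\<^sub>z\<close> does not, the right-hand side is infinite.\<close>

definition cross_entropy_term :: "real \<Rightarrow> real \<Rightarrow> ereal" where
  "cross_entropy_term a b = (if a = 0 then 0 else if b = 0 then \<infinity> else ereal (- a * ln b))"

lemma cross_entropy_eq_sum_term:
  "cross_entropy \<Omega> p q = (\<Sum>w\<in>\<Omega>. cross_entropy_term (p w) (q w))"
  unfolding cross_entropy_def cross_entropy_term_def ..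

lemma cross_entropy_term_real:
  "(a \<noteq> 0 \<Longrightarrow> b \<noteq> 0) \<Longrightarrow> cross_entropy_term a b = ereal (- a * ln b)"
  by (auto simp: cross_entropy_term_def)

lemma cross_entropy_real:
  assumes "\<And>w. w \<in> \<Omega> \<Longrightarrow> p w \<noteq> 0 \<Longrightarrow> q w \<noteq> 0"
  shows "cross_entropy \<Omega> p q = ereal (\<Sum>w\<in>\<Omega>. - p w * ln (q w))"
  unfolding cross_entropy_eq_sum_term sum_ereal[symmetric]
  using assms by (intro sum.cong refl cross_entropy_term_real)

lemma entropy_real: "entropy \<Omega> p = ereal (\<Sum>w\<in>\<Omega>. - p w * ln (p w))"
  unfolding entropy_def by (rule cross_entropy_real)

lemma cross_entropy_infinite:
  assumes "finite \<Omega>" "w \<in> \<Omega>" "p w \<noteq> 0" "q w = 0"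
  shows "cross_entropy \<Omega> p q = \<infinity>"
  unfolding cross_entropy_eq_sum_term sum_Pinfty
  using assms by (auto simp: cross_entropy_term_def)

lemma cross_entropy_term_sum_le:
  assumes "finite Z" "\<And>z. z \<in> Z \<Longrightarrow> 0 \<le> P z" "\<And>z. z \<in> Z \<Longrightarrow> 0 \<le> Q z"
  shows "cross_entropy_term (\<Sum>z\<in>Z. P z) (\<Sum>z\<in>Z. Q z) \<le> (\<Sum>z\<in>Z. cross_entropy_term (P z) (Q z))"
proof (cases "\<forall>z\<in>Z. P z \<noteq> 0 \<longrightarrow> Q z \<noteq> 0")
  case False
  then have "(\<Sum>z\<in>Z. cross_entropy_term (P z) (Q z)) = \<infinity>"
    using assms(1) by (auto simp: sum_Pinfty cross_entropy_term_def)
  then show ?thesis by simp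
next
  case True
  have Q_pos: "0 < Q z" and Q_le: "Q z \<le> (\<Sum>z\<in>Z. Q z)" if "z \<in> Z" "P z \<noteq> 0" for z
    using that True assms by (auto simp: order.strict_iff_order intro: member_le_sum)
  have "(\<Sum>z\<in>Z. P z * ln (Q z)) \<le> (\<Sum>z\<in>Z. P z * ln (\<Sum>z\<in>Z. Q z))"
    using Q_pos Q_le assms(2) by (intro sum_mono) (fastforce intro: mult_left_mono)
  moreover have "(\<Sum>z\<in>Z. P z) \<noteq> 0 \<Longrightarrow> (\<Sum>z\<in>Z. Q z) \<noteq> 0"
    using Q_pos Q_le by (metis order.strict_trans2 less_irrefl sum.neutral)
  ultimately show ?thesis
    using True by (simp add: cross_entropy_term_real sum_distrib_right sum_negf)
qed

lemma cross_entropy_sum_le: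
  assumes "finite Z"
    and "\<And>w z. w \<in> \<Omega> \<Longrightarrow> z \<in> Z \<Longrightarrow> 0 \<le> P w z" "\<And>w z. w \<in> \<Omega> \<Longrightarrow> z \<in> Z \<Longrightarrow> 0 \<le> Q w z"
  shows "cross_entropy \<Omega> (\<lambda>w. \<Sum>z\<in>Z. P w z) (\<lambda>w. \<Sum>z\<in>Z. Q w z)
         \<le> (\<Sum>w\<in>\<Omega>. \<Sum>z\<in>Z. cross_entropy_term (P w z) (Q w z))"
  unfolding cross_entropy_eq_sum_term
  using assms by (intro sum_mono cross_entropy_term_sum_le) auto

lemma sum_PiE_Un_mult:
  fixes F G :: "('v \<Rightarrow> 'a) \<Rightarrow> 'c::comm_semiring_0"
  assumes "A \<inter> B = {}" "finite (PiE A D)" "finite (PiE B D)"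
  shows "(\<Sum>x\<in>PiE (A \<union> B) D. F (restrict x A) * G (restrict x B))
       = (\<Sum>y\<in>PiE A D. F y) * (\<Sum>y\<in>PiE B D. G y)"
proof -
  have "(\<Sum>x\<in>PiE (A \<union> B) D. F (restrict x A) * G (restrict x B))
      = (\<Sum>(f, g)\<in>PiE A D \<times> PiE B D. F f * G g)"
    using assms(1)
    by (intro sum.reindex_bij_witness[of _ "\<lambda>(f, g) v. if v \<in> A then f v else g v"
          "\<lambda>x. (restrict x A, restrict x B)"])
       (auto simp: PiE_def extensional_def Pi_def fun_eq_iff split: if_splits)
  then show ?thesis
    by (simp add: sum_product sum.cartesian_product)
qed

lemma sum_PiE_UN_prod:
  fixes G :: "'k \<Rightarrow> ('v \<Rightarrow> 'a) \<Rightarrow> 'c::comm_semiring_1"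
  assumes "finite K" "disjoint_family_on A K" "\<And>k. k \<in> K \<Longrightarrow> finite (A k)"
    and "\<And>k i. k \<in> K \<Longrightarrow> i \<in> A k \<Longrightarrow> finite (D i)"
  shows "(\<Sum>x\<in>PiE (\<Union>k\<in>K. A k) D. \<Prod>k\<in>K. G k (restrict x (A k)))
       = (\<Prod>k\<in>K. \<Sum>y\<in>PiE (A k) D. G k y)"
  using assms
proof (induction K rule: finite_induct)
  case empty
  then show ?case by simp
next
  case (insert k K)
  let ?U = "\<Union>j\<in>K. A j"
  have disj: "A k \<inter> ?U = {}"
    using insert.prems(1) insert.hyps(2) unfolding disjoint_family_on_def by fastforce
  have "?U \<inter> A j = A j" if "j \<in> K" for j
    using that by auto
  then have "(\<Sum>x\<in>PiE (A k \<union> ?U) D. \<Prod>j\<in>insert k K. G j (restrict x (A j)))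
      = (\<Sum>x\<in>PiE (A k \<union> ?U) D. G k (restrict x (A k)) *
           (\<lambda>y. \<Prod>j\<in>K. G j (restrict y (A j))) (restrict x ?U))"
    using insert.hyps by (intro sum.cong refl) (simp cong: prod.cong)
  also have "\<dots> = (\<Sum>y\<in>PiE (A k) D. G k y) * (\<Sum>y\<in>PiE ?U D. \<Prod>j\<in>K. G j (restrict y (A j)))"
    using insert.prems insert.hyps by (intro sum_PiE_Un_mult disj finite_PiE) auto
  also have "(\<Sum>y\<in>PiE ?U D. \<Prod>j\<in>K. G j (restrict y (A j))) = (\<Prod>j\<in>K. \<Sum>y\<in>PiE (A j) D. G j y)"
    using insert.prems by (intro insert.IH) (auto intro: disjoint_family_on_mono)
  finally show ?case
    using insert.hyps by simp
qed

lemma sum_PiE_Un_UN_prod: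
  fixes F :: "('v \<Rightarrow> 'a) \<Rightarrow> 'c::comm_semiring_1" and G :: "'k \<Rightarrow> ('v \<Rightarrow> 'a) \<Rightarrow> 'c"
  assumes "finite K" "disjoint_family_on A K" "\<And>k. k \<in> K \<Longrightarrow> finite (A k)"
    and "finite C" "C \<inter> (\<Union>k\<in>K. A k) = {}"
    and "\<And>i. i \<in> C \<union> (\<Union>k\<in>K. A k) \<Longrightarrow> finite (D i)"
  shows "(\<Sum>x\<in>PiE (C \<union> (\<Union>k\<in>K. A k)) D. F (restrict x C) * (\<Prod>k\<in>K. G k (restrict x (A k))))
       = (\<Sum>y\<in>PiE C D. F y) * (\<Prod>k\<in>K. \<Sum>y\<in>PiE (A k) D. G k y)"
proof -
  let ?U = "\<Union>k\<in>K. A k"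
  have "?U \<inter> A k = A k" if "k \<in> K" for k
    using that by auto
  then have "(\<Sum>x\<in>PiE (C \<union> ?U) D. F (restrict x C) * (\<Prod>k\<in>K. G k (restrict x (A k))))
      = (\<Sum>x\<in>PiE (C \<union> ?U) D. F (restrict x C) * (\<lambda>y. \<Prod>k\<in>K. G k (restrict y (A k))) (restrict x ?U))"
    by (intro sum.cong refl) (simp cong: prod.cong)
  also have "\<dots> = (\<Sum>y\<in>PiE C D. F y) * (\<Sum>y\<in>PiE ?U D. \<Prod>k\<in>K. G k (restrict y (A k)))"
    using assms by (intro sum_PiE_Un_mult finite_PiE) auto
  also have "(\<Sum>y\<in>PiE ?U D. \<Prod>k\<in>K. G k (restrict y (A k))) = (\<Prod>k\<in>K. \<Sum>y\<in>PiE (A k) D. G k y)"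
    using assms by (intro sum_PiE_UN_prod) auto
  finally show ?thesis .
qed

locale bucket_mixture =
  fixes V :: "'v set" and D :: "'v \<Rightarrow> 'a set"
    and Bs :: "'b set" and XB :: "'b \<Rightarrow> 'v set"
    and Zs :: "'z set" and pz :: "'z \<Rightarrow> real"
    and pu :: "'z \<Rightarrow> 'v \<Rightarrow> 'a \<Rightarrow> real" and X' :: "'v set"
  assumes X'_def: "X' = V - (\<Union>b\<in>Bs. XB b)"
    and finV: "finite V"
    and finD: "\<And>i. i \<in> V \<Longrightarrow> finite (D i)"
    and finBs: "finite Bs"
    and XB_sub: "\<And>b. b \<in> Bs \<Longrightarrow> XB b \<subseteq> V"
    and XB_disj: "disjoint_family_on XB Bs"
    and pz_dist: "is_distribution Zs pz"
    and pu_dist: "\<And>z i. z \<in> Zs \<Longrightarrow> i \<in> X' \<Longrightarrow> is_distribution (D i) (pu z i)"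
begin

text \<open>\<open>latent z x'\<close> is the paper's \<open>p(x', z)\<close>, and \<open>component pB z x\<close> the joint density
  \<open>p(x, z)\<close> of the mixture built from the block distributions \<open>pB\<close>.\<close>

definition latent :: "'z \<Rightarrow> ('v \<Rightarrow> 'a) \<Rightarrow> real" where
  "latent z x' = pz z * (\<Prod>i\<in>X'. pu z i (x' i))"

definition component :: "('z \<Rightarrow> 'b \<Rightarrow> ('v \<Rightarrow> 'a) \<Rightarrow> real) \<Rightarrow> 'z \<Rightarrow> ('v \<Rightarrow> 'a) \<Rightarrow> real" where
  "component pB z x = latent z (restrict x X') * (\<Prod>b\<in>Bs. pB z b (restrict x (XB b)))"

definition block_abs_cont :: "('z \<Rightarrow> 'b \<Rightarrow> ('v \<Rightarrow> 'a) \<Rightarrow> real) \<Rightarrow> ('z \<Rightarrow> 'b \<Rightarrow> ('v \<Rightarrow> 'a) \<Rightarrow> real) \<Rightarrow> bool" where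
  "block_abs_cont pB qB \<longleftrightarrow>
     (\<forall>z\<in>Zs. \<forall>b\<in>Bs. \<forall>w\<in>PiE (XB b) D. pz z \<noteq> 0 \<longrightarrow> pB z b w \<noteq> 0 \<longrightarrow> qB z b w \<noteq> 0)"

lemma finite_Zs: "finite Zs"
  and pz_nonneg: "z \<in> Zs \<Longrightarrow> 0 \<le> pz z"
  using pz_dist by (auto simp: is_distribution_def)

lemma X'_subset: "X' \<subseteq> V"
  by (auto simp: X'_def)

lemma finite_X': "finite X'"
  using finV X'_subset by (rule finite_subset[rotated])

lemma finite_XB: "b \<in> Bs \<Longrightarrow> finite (XB b)"
  using finV XB_sub by (rule finite_subset[rotated])

lemma finite_PiE_XB: "b \<in> Bs \<Longrightarrow> finite (PiE (XB b) D)"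
  using finite_XB XB_sub finD by (intro finite_PiE) auto

lemma restrict_XB_in_PiE: "x \<in> PiE V D \<Longrightarrow> b \<in> Bs \<Longrightarrow> restrict x (XB b) \<in> PiE (XB b) D"
  using XB_sub by (auto simp: PiE_iff)

lemma restrict_X'_in_PiE: "x \<in> PiE V D \<Longrightarrow> restrict x X' \<in> PiE X' D"
  by (auto simp: PiE_iff X'_def)

lemma mixture_eq_sum_component: "mixture Zs pz Bs XB pB X' pu x = (\<Sum>z\<in>Zs. component pB z x)"
  unfolding mixture_def component_def latent_def
  by (intro sum.cong refl) (simp add: ac_simps cong: prod.cong)

lemma latent_nonneg: "z \<in> Zs \<Longrightarrow> x' \<in> PiE X' D \<Longrightarrow> 0 \<le> latent z x'"
  using pz_nonneg pu_dist unfolding latent_def is_distribution_def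
  by (intro mult_nonneg_nonneg prod_nonneg) (auto simp: PiE_iff)

lemma sum_latent:
  assumes "z \<in> Zs"
  shows "(\<Sum>x'\<in>PiE X' D. latent z x') = pz z"
proof -
  have "(\<Sum>x'\<in>PiE X' D. \<Prod>i\<in>X'. pu z i (x' i)) = (\<Prod>i\<in>X'. \<Sum>a\<in>D i. pu z i a)"
    using finite_X' finD X'_subset by (subst prod_sum_PiE) auto
  also have "\<dots> = 1"
    using pu_dist assms by (simp add: is_distribution_def)
  finally show ?thesis
    by (simp add: latent_def sum_distrib_left[symmetric])
qed

lemma component_nonneg:
  assumes "\<And>z b w. z \<in> Zs \<Longrightarrow> b \<in> Bs \<Longrightarrow> w \<in> PiE (XB b) D \<Longrightarrow> 0 \<le> pB z b w"
  shows "x \<in> PiE V D \<Longrightarrow> z \<in> Zs \<Longrightarrow> 0 \<le> component pB z x"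
  unfolding component_def using assms latent_nonneg restrict_XB_in_PiE restrict_X'_in_PiE
  by (intro mult_nonneg_nonneg prod_nonneg) auto

lemma sum_PiE_factor:
  fixes F :: "('v \<Rightarrow> 'a) \<Rightarrow> 'c::comm_semiring_1" and G :: "'b \<Rightarrow> ('v \<Rightarrow> 'a) \<Rightarrow> 'c"
  shows "(\<Sum>x\<in>PiE V D. F (restrict x X') * (\<Prod>b\<in>Bs. G b (restrict x (XB b))))
     = (\<Sum>y\<in>PiE X' D. F y) * (\<Prod>b\<in>Bs. \<Sum>y\<in>PiE (XB b) D. G b y)"
proof -
  have V_eq: "V = X' \<union> (\<Union>b\<in>Bs. XB b)"
    using XB_sub by (auto simp: X'_def)
  show ?thesis
    unfolding V_eq
    using finBs XB_disj finite_XB finite_X' finD X'_subset XB_sub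
    by (intro sum_PiE_Un_UN_prod) (auto simp: X'_def)
qed

lemma sum_component_mult_latent:
  assumes "\<And>b. b \<in> Bs \<Longrightarrow> is_distribution (PiE (XB b) D) (pB z b)"
  shows "(\<Sum>x\<in>PiE V D. component pB z x * h (restrict x X')) = (\<Sum>x'\<in>PiE X' D. latent z x' * h x')"
proof -
  have "(\<Sum>x\<in>PiE V D. component pB z x * h (restrict x X'))
      = (\<Sum>x\<in>PiE V D. (\<lambda>x'. latent z x' * h x') (restrict x X') * (\<Prod>b\<in>Bs. pB z b (restrict x (XB b))))"
    by (simp add: component_def ac_simps)
  also have "\<dots> = (\<Sum>x'\<in>PiE X' D. latent z x' * h x') * (\<Prod>b\<in>Bs. \<Sum>w\<in>PiE (XB b) D. pB z b w)"
    by (rule sum_PiE_factor)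
  finally show ?thesis
    using assms by (simp add: is_distribution_def)
qed

lemma sum_component_mult_block:
  assumes "\<And>b. b \<in> Bs \<Longrightarrow> is_distribution (PiE (XB b) D) (pB z b)" "z \<in> Zs" "b0 \<in> Bs"
  shows "(\<Sum>x\<in>PiE V D. component pB z x * h (restrict x (XB b0)))
       = pz z * (\<Sum>w\<in>PiE (XB b0) D. pB z b0 w * h w)"
proof -
  define G where "G b w = pB z b w * (if b = b0 then h w else 1)" for b w
  have "(\<Prod>b\<in>Bs. G b (restrict x (XB b))) = (\<Prod>b\<in>Bs. pB z b (restrict x (XB b))) * h (restrict x (XB b0))" for x
    using finBs assms(3) by (simp add: G_def prod.distrib prod.delta)
  then have "(\<Sum>x\<in>PiE V D. component pB z x * h (restrict x (XB b0)))
      = (\<Sum>x\<in>PiE V D. latent z (restrict x X') * (\<Prod>b\<in>Bs. G b (restrict x (XB b))))"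
    by (simp add: component_def ac_simps)
  also have "\<dots> = pz z * (\<Prod>b\<in>Bs. \<Sum>w\<in>PiE (XB b) D. G b w)"
    by (simp add: sum_PiE_factor sum_latent assms(2))
  also have "(\<Prod>b\<in>Bs. \<Sum>w\<in>PiE (XB b) D. G b w) = (\<Prod>b\<in>Bs. if b = b0 then \<Sum>w\<in>PiE (XB b0) D. pB z b0 w * h w else 1)"
    using assms(1) by (intro prod.cong) (auto simp: G_def is_distribution_def)
  finally show ?thesis
    by (simp only: prod.delta[OF finBs] assms(3) if_True)
qed

lemma component_support:
  assumes "block_abs_cont pB qB" "x \<in> PiE V D" "z \<in> Zs" "b \<in> Bs" "component pB z x \<noteq> 0"
  shows "qB z b (restrict x (XB b)) \<noteq> 0"
  using assms finBs restrict_XB_in_PiE[OF assms(2,4)]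
  by (auto simp: block_abs_cont_def component_def latent_def)

lemma ln_component:
  assumes "latent z (restrict x X') \<noteq> 0" "\<And>b. b \<in> Bs \<Longrightarrow> qB z b (restrict x (XB b)) \<noteq> 0"
  shows "ln (component qB z x) = ln (latent z (restrict x X')) + (\<Sum>b\<in>Bs. ln (qB z b (restrict x (XB b))))"
  using assms finBs by (simp add: component_def ln_mult ln_prod)

lemma component_mult_ln_component:
  assumes "block_abs_cont pB qB" "x \<in> PiE V D" "z \<in> Zs"
  shows "component pB z x * ln (component qB z x)
       = component pB z x * ln (latent z (restrict x X'))
         + (\<Sum>b\<in>Bs. component pB z x * ln (qB z b (restrict x (XB b))))"
proof (cases "component pB z x = 0")
  case False
  then have "latent z (restrict x X') \<noteq> 0"
    by (simp add: component_def)
  with False show ?thesis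
    using component_support[OF assms] by (simp add: ln_component distrib_left sum_distrib_left)
qed simp

lemma sum_component_ln_component:
  assumes "\<And>b. b \<in> Bs \<Longrightarrow> is_distribution (PiE (XB b) D) (pB z b)"
    and "block_abs_cont pB qB" "z \<in> Zs"
  shows "(\<Sum>x\<in>PiE V D. - component pB z x * ln (component qB z x))
       = (\<Sum>b\<in>Bs. pz z * (\<Sum>w\<in>PiE (XB b) D. - pB z b w * ln (qB z b w)))
         + (\<Sum>x'\<in>PiE X' D. - latent z x' * ln (latent z x'))"
proof -
  have latent: "(\<Sum>x\<in>PiE V D. component pB z x * ln (latent z (restrict x X')))
      = (\<Sum>x'\<in>PiE X' D. latent z x' * ln (latent z x'))"
    using sum_component_mult_latent[of pB z "\<lambda>x'. ln (latent z x')", OF assms(1)] by simp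
  have block: "(\<Sum>x\<in>PiE V D. component pB z x * ln (qB z b (restrict x (XB b))))
      = pz z * (\<Sum>w\<in>PiE (XB b) D. pB z b w * ln (qB z b w))" if "b \<in> Bs" for b
    using sum_component_mult_block[of pB z b "\<lambda>w. ln (qB z b w)", OF assms(1,3) that] by simp
  have "(\<Sum>x\<in>PiE V D. component pB z x * ln (component qB z x))
      = (\<Sum>x\<in>PiE V D. component pB z x * ln (latent z (restrict x X')))
        + (\<Sum>b\<in>Bs. \<Sum>x\<in>PiE V D. component pB z x * ln (qB z b (restrict x (XB b))))"
    using assms(2,3) by (simp add: component_mult_ln_component sum.distrib sum.swap[of _ Bs])
  also have "\<dots> = (\<Sum>x'\<in>PiE X' D. latent z x' * ln (latent z x'))
        + (\<Sum>b\<in>Bs. pz z * (\<Sum>w\<in>PiE (XB b) D. pB z b w * ln (qB z b w)))"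
    by (simp add: latent block)
  finally show ?thesis
    by (simp add: sum_negf sum_distrib_left)
qed

lemma joint_cross_entropy_eq:
  assumes "\<And>z b. z \<in> Zs \<Longrightarrow> b \<in> Bs \<Longrightarrow> is_distribution (PiE (XB b) D) (pB z b)"
    and "block_abs_cont pB qB"
  shows "(\<Sum>x\<in>PiE V D. \<Sum>z\<in>Zs. cross_entropy_term (component pB z x) (component qB z x))
       = (\<Sum>b\<in>Bs. \<Sum>z\<in>Zs. ereal (pz z) * cross_entropy (PiE (XB b) D) (pB z b) (qB z b))
         + entropy (PiE X' D \<times> Zs) (\<lambda>(x', z). latent z x')"
proof -
  have "component qB z x \<noteq> 0" if "x \<in> PiE V D" "z \<in> Zs" "component pB z x \<noteq> 0" for x z
    using that component_support[OF assms(2) that(1,2) _ that(3)] finBs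
    by (simp add: component_def)
  then have "(\<Sum>x\<in>PiE V D. \<Sum>z\<in>Zs. cross_entropy_term (component pB z x) (component qB z x))
      = ereal (\<Sum>z\<in>Zs. \<Sum>x\<in>PiE V D. - component pB z x * ln (component qB z x))"
    by (simp add: cross_entropy_term_real sum.swap[of _ Zs] cong: sum.cong)
  also have "(\<Sum>z\<in>Zs. \<Sum>x\<in>PiE V D. - component pB z x * ln (component qB z x))
      = (\<Sum>z\<in>Zs. (\<Sum>b\<in>Bs. pz z * (\<Sum>w\<in>PiE (XB b) D. - pB z b w * ln (qB z b w)))
          + (\<Sum>x'\<in>PiE X' D. - latent z x' * ln (latent z x')))"
    using assms by (intro sum.cong refl sum_component_ln_component) auto
  also have "ereal \<dots> = ereal (\<Sum>b\<in>Bs. \<Sum>z\<in>Zs. pz z * (\<Sum>w\<in>PiE (XB b) D. - pB z b w * ln (qB z b w)))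
      + ereal (\<Sum>z\<in>Zs. \<Sum>x'\<in>PiE X' D. - latent z x' * ln (latent z x'))"
    by (simp only: sum.distrib sum.swap[of _ Zs Bs] plus_ereal.simps)
  also have "ereal (\<Sum>b\<in>Bs. \<Sum>z\<in>Zs. pz z * (\<Sum>w\<in>PiE (XB b) D. - pB z b w * ln (qB z b w)))
      = (\<Sum>b\<in>Bs. \<Sum>z\<in>Zs. ereal (pz z) * cross_entropy (PiE (XB b) D) (pB z b) (qB z b))"
  proof -
    have "ereal (pz z) * cross_entropy (PiE (XB b) D) (pB z b) (qB z b)
        = ereal (pz z * (\<Sum>w\<in>PiE (XB b) D. - pB z b w * ln (qB z b w)))"
      if "z \<in> Zs" "b \<in> Bs" for z b
      using assms(2) that
      by (cases "pz z = 0") (simp_all add: block_abs_cont_def cross_entropy_real zero_ereal_def[symmetric])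
    then show ?thesis
      by (simp cong: sum.cong)
  qed
  also have "ereal (\<Sum>z\<in>Zs. \<Sum>x'\<in>PiE X' D. - latent z x' * ln (latent z x'))
      = entropy (PiE X' D \<times> Zs) (\<lambda>(x', z). latent z x')"
    unfolding entropy_real by (subst sum.swap) (simp add: sum.cartesian_product split_beta)
  finally show ?thesis .
qed

lemma block_cross_entropy_infinite:
  assumes "\<not> block_abs_cont pB qB"
  shows "(\<Sum>b\<in>Bs. \<Sum>z\<in>Zs. ereal (pz z) * cross_entropy (PiE (XB b) D) (pB z b) (qB z b)) = \<infinity>"
proof -
  obtain z b w where "z \<in> Zs" "b \<in> Bs" "w \<in> PiE (XB b) D" "pz z \<noteq> 0" "pB z b w \<noteq> 0" "qB z b w = 0"
    using assms unfolding block_abs_cont_def by blast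
  moreover have "0 < pz z"
    using \<open>z \<in> Zs\<close> \<open>pz z \<noteq> 0\<close> pz_nonneg by (simp add: order.strict_iff_order)
  ultimately have "ereal (pz z) * cross_entropy (PiE (XB b) D) (pB z b) (qB z b) = \<infinity>"
    by (simp add: cross_entropy_infinite finite_PiE_XB)
  then show ?thesis
    using \<open>z \<in> Zs\<close> \<open>b \<in> Bs\<close> finBs finite_Zs by (auto simp: sum_Pinfty)
qed

end

theorem theorem1:
  fixes V :: "'v set" and D :: "'v \<Rightarrow> 'a set"
    and Bs :: "'b set" and XB :: "'b \<Rightarrow> 'v set"
    and Zs :: "'z set" and pz :: "'z \<Rightarrow> real"
    and pB qB :: "'z \<Rightarrow> 'b \<Rightarrow> ('v \<Rightarrow> 'a) \<Rightarrow> real"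
    and pu :: "'z \<Rightarrow> 'v \<Rightarrow> 'a \<Rightarrow> real"
  defines "X' \<equiv> V - (\<Union>b\<in>Bs. XB b)"
  assumes finV: "finite V"
    and finD: "\<And>i. i \<in> V \<Longrightarrow> finite (D i)"
    and finBs: "finite Bs"
    and XB_sub: "\<And>b. b \<in> Bs \<Longrightarrow> XB b \<subseteq> V"
    and XB_disj: "disjoint_family_on XB Bs"
    and pz_dist: "is_distribution Zs pz"
    and pB_dist: "\<And>z b. z \<in> Zs \<Longrightarrow> b \<in> Bs \<Longrightarrow> is_distribution (PiE (XB b) D) (pB z b)"
    and qB_dist: "\<And>z b. z \<in> Zs \<Longrightarrow> b \<in> Bs \<Longrightarrow> is_distribution (PiE (XB b) D) (qB z b)"
    and pu_dist: "\<And>z i. z \<in> Zs \<Longrightarrow> i \<in> X' \<Longrightarrow> is_distribution (D i) (pu z i)"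
  shows "cross_entropy (PiE V D) (mixture Zs pz Bs XB pB X' pu) (mixture Zs pz Bs XB qB X' pu)
         \<le> (\<Sum>b\<in>Bs. \<Sum>z\<in>Zs. ereal (pz z) * cross_entropy (PiE (XB b) D) (pB z b) (qB z b))
           + entropy (PiE X' D \<times> Zs) (\<lambda>(x', z). pz z * (\<Prod>i\<in>X'. pu z i (x' i)))"
proof -
  interpret bucket_mixture V D Bs XB Zs pz pu X'
    using assms by unfold_locales simp_all
  have "cross_entropy (PiE V D) (mixture Zs pz Bs XB pB X' pu) (mixture Zs pz Bs XB qB X' pu)
      \<le> (\<Sum>x\<in>PiE V D. \<Sum>z\<in>Zs. cross_entropy_term (component pB z x) (component qB z x))"
    unfolding mixture_eq_sum_component using pB_dist qB_dist
    by (intro cross_entropy_sum_le finite_Zs component_nonneg) (auto simp: is_distribution_def)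
  moreover have "(\<lambda>(x', z). pz z * (\<Prod>i\<in>X'. pu z i (x' i))) = (\<lambda>(x', z). latent z x')"
    by (simp add: latent_def)
  ultimately show ?thesis
    using joint_cross_entropy_eq[OF pB_dist] block_cross_entropy_infinite
    by (cases "block_abs_cont pB qB") simp_all
qed

end
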